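(* Let $\lambda>0$, $\mu>0$ and $0<b<a<1$, and define $$g(\lambda)=\frac{\frac{\mu}{\lambda+\mu}+\frac{a\mu}{\lambda+a\mu}+\frac{b\mu}{\lambda+b\mu}+0\cdot\frac{2}{\lambda}}{\frac{1}{\lambda+\mu}+\frac{1}{\lambda+a\mu}+\frac{1}{\lambda+b\mu}+\frac{2}{\lambda}}.$$ If $g(\lambda)>\lambda$ (the stability condition of the 4-phase model), then $g(\lambda)<b\mu$.
   Context: Here $g(\lambda)$ is the long-run average service rate (for large queue length) of the following 4-phase vacation queue: a continuous-time Markov chain on states $(n,i)$, $n\ge 0$, $i\in\{1,2,3,4\}$, with $n$ the number of customers and $i$ the server phase; for $n\ge1$ and $i\in\{1,2,3\}$, $(n,i)\to(n-1,i+1)$ at rate $\mu_i$ (where $\mu_1=\mu,\mu_2=a\mu,\mu_3=b\mu$) and $(n,i)\to(n+1,i+1)$ at rate $\lambda$; $(0,i)\to(1,i+1)$ at rate $\lambda$ for $i\in\{1,2,3\}$; and $(n,4)\to(n+2,1)$ at rate $\lambda/2$. The conclusion means this model's average service rate is below that of an $M/M/1$ queue with service rate $b\mu$. *)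

theory Defs
  imports Complex_Main
begin

text \<open>Long-run average service rate of the 4-phase vacation queue.
  The numerator keeps the literal term 0 * (2/lambda) of the paper (phase 4 serves nobody).\<close>
definition g :: "real \<Rightarrow> real \<Rightarrow> real \<Rightarrow> real \<Rightarrow> real" where
  "g mu a b lam =
     (mu / (lam + mu) + a * mu / (lam + a * mu) + b * mu / (lam + b * mu) + 0 * (2 / lam))
     / (1 / (lam + mu) + 1 / (lam + a * mu) + 1 / (lam + b * mu) + 2 / lam)"

end

theory Submission
  imports Defs
begin

text \<open>A phase with service rate \<open>m\<close> ends with a service (rather than an arrival) with probability
  \<open>p = m / (\<lambda> + m)\<close>, and then \<open>m = \<lambda> p / (1 - p)\<close> and \<open>1 / (\<lambda> + m) = (1 - p) / \<lambda>\<close>.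
  Counting the vacation phase as two phases with \<open>p = 0\<close>, this writes \<open>g = \<lambda> \<cdot> odds p\<close> with
  \<open>p\<close> the mean of the five probabilities, while \<open>\<lambda> = \<lambda> \<cdot> odds (1/2)\<close> and
  \<open>b\<mu> = \<lambda> \<cdot> odds p\<^sub>3\<close>. As odds is increasing, stability says \<open>p > 1/2\<close>; since
  \<open>p\<^sub>1, p\<^sub>2 < 1\<close> this forces \<open>p\<^sub>3 > 1/2\<close>, hence \<open>p < (2 + p\<^sub>3) / 5 < p\<^sub>3\<close> and \<open>g < b\<mu>\<close>.\<close>

definition odds :: "real \<Rightarrow> real" where
  "odds t = t / (1 - t)"

definition service_first :: "real \<Rightarrow> real \<Rightarrow> real" where
  "service_first m lam = m / (lam + m)"

lemma odds_less_odds_iff: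
  assumes "s < 1" and "t < 1"
  shows "odds s < odds t \<longleftrightarrow> s < t"
proof -
  have "odds u = 1 / (1 - u) - 1" if "u < 1" for u
    using that by (simp add: odds_def field_simps)
  moreover have "1 / (1 - s) < 1 / (1 - t) \<longleftrightarrow> s < t"
    using assms by (simp add: divide_less_eq)
  ultimately show ?thesis
    using assms by simp
qed

lemma service_first_less_one:
  assumes "lam > 0" and "m > 0"
  shows "service_first m lam < 1"
  using assms by (simp add: service_first_def divide_less_eq)

lemma one_minus_service_first:
  assumes "lam > 0" and "m > 0"
  shows "1 - service_first m lam = lam / (lam + m)"
  using assms by (simp add: service_first_def diff_divide_eq_iff)

lemma rate_eq_odds_service_first:
  assumes "lam > 0" and "m > 0"
  shows "m = lam * odds (service_first m lam)"
  using assms by (simp add: odds_def one_minus_service_first) (simp add: service_first_def)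

lemma inverse_add_rate_eq:
  assumes "lam > 0" and "m > 0"
  shows "1 / (lam + m) = (1 - service_first m lam) / lam"
  using assms by (simp add: one_minus_service_first)

lemma g_eq_odds_mean_service_first:
  assumes "lam > 0" and "mu > 0" and "a > 0" and "b > 0"
  shows "g mu a b lam =
    lam * odds ((service_first mu lam + service_first (a * mu) lam + service_first (b * mu) lam) / 5)"
proof -
  define N where "N = service_first mu lam + service_first (a * mu) lam + service_first (b * mu) lam"
  have "a * mu > 0" and "b * mu > 0"
    using assms by simp_all
  then have "N < 5"
    using service_first_less_one[OF \<open>lam > 0\<close>] \<open>mu > 0\<close> unfolding N_def
    by (smt (verit))
  have "g mu a b lam = N / ((5 - N) / lam)"
    using assms \<open>a * mu > 0\<close> \<open>b * mu > 0\<close>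
    unfolding g_def N_def
    by (simp add: inverse_add_rate_eq service_first_def add_divide_distrib[symmetric])
  also have "\<dots> = lam * odds (N / 5)"
    using \<open>N < 5\<close> by (simp add: odds_def field_simps)
  finally show ?thesis
    unfolding N_def .
qed

theorem theorem2:
  fixes lam mu a b :: real
  assumes "lam > 0" and "mu > 0" and "0 < b" and "b < a" and "a < 1"
    and "g mu a b lam > lam"
  shows "g mu a b lam < b * mu"
proof -
  define p1 p2 p3 where "p1 = service_first mu lam" and "p2 = service_first (a * mu) lam"
    and "p3 = service_first (b * mu) lam"
  define p where "p = (p1 + p2 + p3) / 5"
  have "a * mu > 0" and "b * mu > 0"
    using assms by simp_all
  then have "p1 < 1" "p2 < 1" "p3 < 1"
    using assms service_first_less_one unfolding p1_def p2_def p3_def by blast+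
  have g_eq: "g mu a b lam = lam * odds p"
    using assms g_eq_odds_mean_service_first unfolding p_def p1_def p2_def p3_def by simp
  have "lam * odds (1 / 2) < lam * odds p"
    using assms(6) g_eq by (simp add: odds_def)
  then have "1 / 2 < p"
    using \<open>lam > 0\<close> \<open>p1 < 1\<close> \<open>p2 < 1\<close> \<open>p3 < 1\<close> odds_less_odds_iff[of "1 / 2" p]
    unfolding p_def by simp
  then have "p < p3"
    using \<open>p1 < 1\<close> \<open>p2 < 1\<close> unfolding p_def by (simp add: field_simps)
  then have "lam * odds p < lam * odds p3"
    using \<open>lam > 0\<close> \<open>p3 < 1\<close> odds_less_odds_iff by simp
  also have "\<dots> = b * mu"
    using \<open>lam > 0\<close> \<open>b * mu > 0\<close> rate_eq_odds_service_first unfolding p3_def by simp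
  finally show ?thesis
    using g_eq by simp
qed

end
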